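(* Let $r>0$ and let $\mu_{1},\mu_{2}$ be symmetric probability measures on $\mathbb{R}^{d}$ supported on $\{x\in\mathbb{R}^{d}:\|x\|_{2}\leq r\}$. Let $\eta:\mathbb{R}^{d}\to\mathbb{R}^{d\times d}$, $\eta(x)=xx^{T}$, and let $\eta_{\#}\mu_{1},\eta_{\#}\mu_{2}$ be the pushforward measures, regarded as probability measures on the Banach space $E=(\mathbb{R}^{d\times d},\|\cdot\|_{\mathrm{op}})$. Then \[W_{2,1}(\mu_{1},\mu_{2})^{2}\leq W_{1,1}(\eta_{\#}\mu_{1},\eta_{\#}\mu_{2}).\]
   Context: A probability measure $\mu$ on $\mathbb{R}^{d}$ is symmetric if $\mu(A)=\mu(-A)$ for all measurable $A$. $\|\cdot\|_{\mathrm{op}}$ is the operator norm. For probability measures on $\mathbb{R}$, $W_{p}(\nu_{1},\nu_{2})=\inf_{\gamma}(\int|x-y|^{p}d\gamma(x,y))^{1/p}$ over couplings. On $\mathbb{R}^{d}$ (Euclidean), $W_{2,1}(\mu_{1},\mu_{2})=\sup_{\|v\|_{2}=1}W_{2}(v_{\#}\mu_{1},v_{\#}\mu_{2})$ with $v_{\#}\mu_i$ the pushforward under $x\mapsto\langle x,v\rangle$. On a Banach space $E$, $W_{1,1}(\nu_{1},\nu_{2})=\sup_{V^{*}\in B_{E^{*}}}W_{1}(V^{*}_{\#}\nu_{1},V^{*}_{\#}\nu_{2})$, where $B_{E^{*}}$ is the unit ball of the dual; for $E=(\mathbb{R}^{d\times d},\|\cdot\|_{\mathrm{op}})$ these are the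 functionals $A\mapsto\mathrm{Tr}(BA)$ with $B$ of trace-class (nuclear) norm at most $1$. *)

theory Defs
  imports "HOL-Probability.Probability"
begin

definition couplings :: "real measure \<Rightarrow> real measure \<Rightarrow> (real \<times> real) measure set" where
  "couplings M N = {\<gamma>. prob_space \<gamma> \<and> sets \<gamma> = sets (borel :: (real \<times> real) measure) \<and>
                        distr \<gamma> borel fst = M \<and> distr \<gamma> borel snd = N}"

definition wasserstein :: "real \<Rightarrow> real measure \<Rightarrow> real measure \<Rightarrow> real" where
  "wasserstein p M N =
     (enn2real (INF \<gamma>\<in>couplings M N. \<integral>\<^sup>+ z. ennreal (\<bar>fst z - snd z\<bar> powr p) \<partial>\<gamma>)) powr (1 / p)"

definition W21 :: "(real^'n) measure \<Rightarrow> (real^'n) measure \<Rightarrow> real" where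
  "W21 \<mu>1 \<mu>2 = (SUP v\<in>{v :: real^'n. norm v = 1}.
      wasserstein 2 (distr \<mu>1 borel (\<lambda>x. x \<bullet> v)) (distr \<mu>2 borel (\<lambda>x. x \<bullet> v)))"

definition op_norm :: "real^'n^'n \<Rightarrow> real" where
  "op_norm A = onorm (\<lambda>x. A *v x)"

definition dual_unit_ball_op :: "(real^'n^'n \<Rightarrow> real) set" where
  "dual_unit_ball_op = {f. linear f \<and> (\<forall>A. \<bar>f A\<bar> \<le> op_norm A)}"

definition W11_op :: "(real^'n^'n) measure \<Rightarrow> (real^'n^'n) measure \<Rightarrow> real" where
  "W11_op \<nu>1 \<nu>2 = (SUP f\<in>dual_unit_ball_op.
      wasserstein 1 (distr \<nu>1 borel f) (distr \<nu>2 borel f))"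

definition outer_self :: "real^'n \<Rightarrow> real^'n^'n" where
  "outer_self x = (\<chi> i j. x $ i * x $ j)"

definition symmetric_measure :: "'a::real_normed_vector measure \<Rightarrow> bool" where
  "symmetric_measure \<mu> \<longleftrightarrow> (\<forall>A\<in>sets \<mu>. emeasure \<mu> A = emeasure \<mu> (uminus ` A))"

end

theory Submission
  imports Defs
begin

(* For a unit vector v, the functional A \<mapsto> v\<^sup>T A v lies in the dual unit ball of
   (R^(d x d), operator norm) and sends x x\<^sup>T to (x \<bullet> v)\<^sup>2. It therefore suffices to show
   W_2(\<nu>1, \<nu>2)\<^sup>2 \<le> W_1(q\<^sub>#\<nu>1, q\<^sub>#\<nu>2) for symmetric laws \<nu>i on the real line and q y = y\<^sup>2.
   Given a coupling of the squared laws, attach an independent fair sign s and map (a, a') to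
   (s sqrt|a|, s sqrt|a'|): by symmetry this is a coupling of \<nu>1 and \<nu>2, and its quadratic
   cost is at most the linear cost of the original one since (sqrt|a| - sqrt|b|)\<^sup>2 \<le> |a - b|.
   The bounded supports keep every transport cost finite, which matters because wasserstein
   takes enn2real of the infimum. *)

lemma uminus_image_eq_vimage: "uminus ` (A :: 'a::group_add set) = uminus -` A"
  by (force simp: image_iff)

lemma sets_uminus_image_borel:
  assumes "A \<in> sets (borel :: 'a::real_normed_vector measure)"
  shows "uminus ` A \<in> sets borel"
proof -
  have "(uminus :: 'a \<Rightarrow> 'a) \<in> borel_measurable borel"
    by (intro borel_measurable_continuous_onI continuous_on_minus continuous_on_id)
  then show ?thesis
    unfolding uminus_image_eq_vimage using assms by (rule measurable_sets_borel)
qed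

lemma symmetric_measure_distr:
  fixes \<mu> :: "'a::real_normed_vector measure" and f :: "'a \<Rightarrow> 'b::real_normed_vector"
  assumes sym: "symmetric_measure \<mu>" and sets: "sets \<mu> = sets borel"
    and f: "f \<in> borel_measurable borel" and odd: "\<And>x. f (- x) = - f x"
  shows "symmetric_measure (distr \<mu> borel f)"
  unfolding symmetric_measure_def
proof (intro ballI)
  fix B assume "B \<in> sets (distr \<mu> borel f)"
  then have B: "B \<in> sets borel" by simp
  have f\<mu>: "f \<in> borel_measurable \<mu>" using f by (simp add: measurable_cong_sets[OF sets refl])
  have space: "space \<mu> = UNIV" using sets_eq_imp_space_eq[OF sets] by simp
  have pre: "f -` B \<in> sets \<mu>"
    using measurable_sets[OF f\<mu> B] by (simp add: space)
  have "emeasure (distr \<mu> borel f) B = emeasure \<mu> (f -` B)"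
    using f\<mu> B by (simp add: emeasure_distr space)
  also have "\<dots> = emeasure \<mu> (uminus ` (f -` B))"
    using sym pre unfolding symmetric_measure_def by blast
  also have "uminus ` (f -` B) = f -` uminus ` B"
    by (force simp: uminus_image_eq_vimage odd)
  also have "emeasure \<mu> \<dots> = emeasure (distr \<mu> borel f) (uminus ` B)"
    using f\<mu> sets_uminus_image_borel[OF B] by (simp add: emeasure_distr space)
  finally show "emeasure (distr \<mu> borel f) B = emeasure (distr \<mu> borel f) (uminus ` B)" .
qed

lemma emeasure_abs_plus_emeasure_neg_abs:
  fixes \<nu> :: "real measure"
  assumes sym: "symmetric_measure \<nu>" and sets: "sets \<nu> = sets borel" and A: "A \<in> sets borel"
  shows "emeasure \<nu> {x. \<bar>x\<bar> \<in> A} + emeasure \<nu> {x. - \<bar>x\<bar> \<in> A} = 2 * emeasure \<nu> A"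
proof -
  have [measurable]: "A \<in> sets \<nu>" "uminus ` A \<in> sets \<nu>"
      "{x. \<bar>x\<bar> \<in> A} \<in> sets \<nu>" "{x. - \<bar>x\<bar> \<in> A} \<in> sets \<nu>"
    using A measurable_sets_borel[of abs] measurable_sets_borel[of "\<lambda>x::real. - \<bar>x\<bar>"]
    by (auto simp: sets sets_uminus_image_borel vimage_def)
  have pointwise: "indicator {x. \<bar>x\<bar> \<in> A} x + indicator {x. - \<bar>x\<bar> \<in> A} x
      = indicator A x + (indicator (uminus ` A) x :: ennreal)" for x :: real
    by (cases "x \<ge> 0") (auto simp: uminus_image_eq_vimage indicator_def)
  have "emeasure \<nu> {x. \<bar>x\<bar> \<in> A} + emeasure \<nu> {x. - \<bar>x\<bar> \<in> A}
      = \<integral>\<^sup>+ x. indicator {x. \<bar>x\<bar> \<in> A} x + indicator {x. - \<bar>x\<bar> \<in> A} x \<partial>\<nu>"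
    by (simp add: nn_integral_add)
  also have "\<dots> = emeasure \<nu> A + emeasure \<nu> (uminus ` A)"
    by (simp add: pointwise nn_integral_add)
  also have "\<dots> = 2 * emeasure \<nu> A"
    using sym A sets by (simp add: symmetric_measure_def mult_2)
  finally show ?thesis .
qed

lemma power2_sqrt_abs_diff_le: "(sqrt \<bar>a\<bar> - sqrt \<bar>b\<bar>)\<^sup>2 \<le> \<bar>a - b :: real\<bar>"
proof -
  define x y where "x = sqrt \<bar>a\<bar>" and "y = sqrt \<bar>b\<bar>"
  have "x \<ge> 0" "y \<ge> 0" by (simp_all add: x_def y_def)
  have "(x - y)\<^sup>2 = \<bar>x - y\<bar> * \<bar>x - y\<bar>"
    by (simp add: power2_eq_square abs_mult_self_eq)
  also have "\<dots> \<le> \<bar>x - y\<bar> * (x + y)"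
    using \<open>x \<ge> 0\<close> \<open>y \<ge> 0\<close> by (intro mult_left_mono) auto
  also have "\<dots> = \<bar>(x - y) * (x + y)\<bar>"
    using \<open>x \<ge> 0\<close> \<open>y \<ge> 0\<close> by (simp add: abs_mult)
  also have "\<dots> = \<bar>x\<^sup>2 - y\<^sup>2\<bar>"
    by (simp add: power2_eq_square algebra_simps)
  also have "\<dots> = \<bar>\<bar>a\<bar> - \<bar>b\<bar>\<bar>" by (simp add: x_def y_def)
  also have "\<dots> \<le> \<bar>a - b\<bar>" by (rule abs_triangle_ineq3)
  finally show ?thesis by (simp add: x_def y_def)
qed

definition bool_sign :: "bool \<Rightarrow> real" where
  "bool_sign b = (if b then 1 else -1)"

lemma abs_bool_sign_mult_diff: "\<bar>bool_sign b * x - bool_sign b * y\<bar> = \<bar>x - y\<bar>"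
  by (cases b) (simp_all add: bool_sign_def)

lemma pair_prob_space_measure_pmf: "prob_space M \<Longrightarrow> pair_prob_space M (measure_pmf p)"
  by (simp add: pair_prob_space_def pair_sigma_finite_def prob_space_imp_sigma_finite
      measure_pmf.prob_space_axioms)

lemma distr_random_sign_sqrt:
  fixes \<gamma> :: "'a measure" and \<pi> :: "'a \<Rightarrow> real" and \<nu> :: "real measure"
  assumes "prob_space \<gamma>" and \<pi>: "\<pi> \<in> borel_measurable \<gamma>"
    and sets: "sets \<nu> = sets borel" and sym: "symmetric_measure \<nu>"
    and marg: "distr \<gamma> borel \<pi> = distr \<nu> borel (\<lambda>x. x\<^sup>2)"
  shows "distr (\<gamma> \<Otimes>\<^sub>M bernoulli_pmf (1/2)) borel (\<lambda>(z, b). bool_sign b * sqrt \<bar>\<pi> z\<bar>) = \<nu>"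
    (is "distr ?P borel ?h = \<nu>")
proof (rule measure_eqI)
  interpret pair_prob_space \<gamma> "bernoulli_pmf (1/2)"
    using \<open>prob_space \<gamma>\<close> by (rule pair_prob_space_measure_pmf)
  have h: "?h \<in> borel_measurable ?P"
    using \<pi> by measurable
  have space_\<nu>: "space \<nu> = UNIV"
    using sets_eq_imp_space_eq[OF sets] by simp
  fix A assume "A \<in> sets (distr ?P borel ?h)"
  then have A: "A \<in> sets borel" by simp
  have slice: "emeasure \<gamma> {z \<in> space \<gamma>. c * sqrt \<bar>\<pi> z\<bar> \<in> A} = emeasure \<nu> {x. c * \<bar>x\<bar> \<in> A}" for c
  proof -
    have B: "(\<lambda>a. c * sqrt \<bar>a\<bar>) -` A \<in> sets borel"
      using A by (intro measurable_sets_borel) auto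
    have "emeasure \<gamma> {z \<in> space \<gamma>. c * sqrt \<bar>\<pi> z\<bar> \<in> A}
        = emeasure (distr \<gamma> borel \<pi>) ((\<lambda>a. c * sqrt \<bar>a\<bar>) -` A)"
      using \<pi> B by (simp add: emeasure_distr vimage_def Int_def conj_commute)
    also have "\<dots> = emeasure \<nu> ((\<lambda>x. x\<^sup>2) -` (\<lambda>a. c * sqrt \<bar>a\<bar>) -` A \<inter> space \<nu>)"
      unfolding marg using _ B by (rule emeasure_distr) (simp add: measurable_cong_sets[OF sets refl])
    finally show ?thesis by (simp add: space_\<nu> vimage_def)
  qed
  have "emeasure (distr ?P borel ?h) A = emeasure ?P (?h -` A \<inter> space ?P)"
    using h A by (rule emeasure_distr)
  also have "\<dots> = (\<integral>\<^sup>+b. emeasure \<gamma> ((\<lambda>z. (z, b)) -` (?h -` A \<inter> space ?P)) \<partial>bernoulli_pmf (1/2))"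
    using measurable_sets[OF h A] by (rule emeasure_pair_measure_alt2)
  also have "\<dots> = (emeasure \<gamma> {z \<in> space \<gamma>. sqrt \<bar>\<pi> z\<bar> \<in> A}
      + emeasure \<gamma> {z \<in> space \<gamma>. - sqrt \<bar>\<pi> z\<bar> \<in> A}) * ennreal (1/2)"
    by (simp add: nn_integral_measure_pmf_finite UNIV_bool bool_sign_def space_pair_measure
        vimage_def Int_def conj_commute distrib_right)
  also have "\<dots> = 2 * emeasure \<nu> A * ennreal (1/2)"
    using slice[of 1] slice[of "-1"] emeasure_abs_plus_emeasure_neg_abs[OF sym sets A] by simp
  also have "\<dots> = emeasure \<nu> A"
  proof -
    have "(2::ennreal) * ennreal (1/2) = 1"
      using ennreal_divide_self[of 2] by (simp add: divide_ennreal_def)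
    then show ?thesis by (metis mult.commute mult.left_commute mult_1)
  qed
  finally show "emeasure (distr ?P borel ?h) A = emeasure \<nu> A" .
qed (simp add: sets)

definition transport_cost :: "real \<Rightarrow> real measure \<Rightarrow> real measure \<Rightarrow> ennreal" where
  "transport_cost p M N = (INF \<gamma>\<in>couplings M N. \<integral>\<^sup>+ z. ennreal (\<bar>fst z - snd z\<bar> powr p) \<partial>\<gamma>)"

lemma wasserstein_1_eq: "wasserstein 1 M N = enn2real (transport_cost 1 M N)"
  by (simp add: wasserstein_def transport_cost_def del: powr_one')

lemma power2_wasserstein_2: "(wasserstein 2 M N)\<^sup>2 = enn2real (transport_cost 2 M N)"
  by (simp add: wasserstein_def transport_cost_def powr_half_sqrt del: powr_numeral)

lemma wasserstein_nonneg: "wasserstein p M N \<ge> 0"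
  by (simp add: wasserstein_def)

lemma couplingsD:
  assumes "\<gamma> \<in> couplings M N"
  shows "prob_space \<gamma>" "sets \<gamma> = sets (borel \<Otimes>\<^sub>M borel)"
    "distr \<gamma> borel fst = M" "distr \<gamma> borel snd = N"
  using assms unfolding couplings_def borel_prod by simp_all

lemma borel_measurable_fst_snd_real [measurable]:
  "fst \<in> borel_measurable (borel :: (real \<times> real) measure)"
  "snd \<in> borel_measurable (borel :: (real \<times> real) measure)"
  by (subst borel_prod[symmetric], measurable)+

definition signed_sqrt_pair :: "(real \<times> real) \<times> bool \<Rightarrow> real \<times> real" where
  "signed_sqrt_pair = (\<lambda>(z, b). (bool_sign b * sqrt \<bar>fst z\<bar>, bool_sign b * sqrt \<bar>snd z\<bar>))"

definition signed_sqrt_coupling :: "(real \<times> real) measure \<Rightarrow> (real \<times> real) measure" where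
  "signed_sqrt_coupling \<gamma> = distr (\<gamma> \<Otimes>\<^sub>M bernoulli_pmf (1/2)) borel signed_sqrt_pair"

lemma measurable_signed_sqrt_pair:
  assumes "sets \<gamma> = sets (borel \<Otimes>\<^sub>M borel)"
  shows "signed_sqrt_pair \<in> measurable (\<gamma> \<Otimes>\<^sub>M measure_pmf p) borel"
proof -
  have [measurable]: "fst \<in> borel_measurable \<gamma>" "snd \<in> borel_measurable \<gamma>"
    by (simp_all add: measurable_cong_sets[OF assms refl])
  show ?thesis
    unfolding signed_sqrt_pair_def by (subst borel_prod[symmetric]) measurable
qed

lemma signed_sqrt_coupling_in_couplings:
  assumes \<gamma>: "\<gamma> \<in> couplings (distr \<nu>1 borel (\<lambda>x. x\<^sup>2)) (distr \<nu>2 borel (\<lambda>x. x\<^sup>2))"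
    and sets1: "sets \<nu>1 = sets borel" and sym1: "symmetric_measure \<nu>1"
    and sets2: "sets \<nu>2 = sets borel" and sym2: "symmetric_measure \<nu>2"
  shows "signed_sqrt_coupling \<gamma> \<in> couplings \<nu>1 \<nu>2"
proof -
  note \<gamma>_props = couplingsD[OF \<gamma>]
  interpret pair_prob_space \<gamma> "bernoulli_pmf (1/2)"
    using \<gamma>_props(1) by (rule pair_prob_space_measure_pmf)
  let ?P = "\<gamma> \<Otimes>\<^sub>M bernoulli_pmf (1/2)"
  have fst_\<gamma>: "fst \<in> borel_measurable \<gamma>" and snd_\<gamma>: "snd \<in> borel_measurable \<gamma>"
    by (simp_all add: measurable_cong_sets[OF \<gamma>_props(2) refl])
  note G = measurable_signed_sqrt_pair[OF \<gamma>_props(2)]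
  have "distr (signed_sqrt_coupling \<gamma>) borel fst = distr ?P borel (\<lambda>(z, b). bool_sign b * sqrt \<bar>fst z\<bar>)"
    unfolding signed_sqrt_coupling_def
    by (subst distr_distr[OF _ G]) (simp_all add: comp_def split_beta' signed_sqrt_pair_def)
  also have "\<dots> = \<nu>1"
    by (rule distr_random_sign_sqrt[OF \<gamma>_props(1) fst_\<gamma> sets1 sym1 \<gamma>_props(3)])
  finally have marginal1: "distr (signed_sqrt_coupling \<gamma>) borel fst = \<nu>1" .
  have "distr (signed_sqrt_coupling \<gamma>) borel snd = distr ?P borel (\<lambda>(z, b). bool_sign b * sqrt \<bar>snd z\<bar>)"
    unfolding signed_sqrt_coupling_def
    by (subst distr_distr[OF _ G]) (simp_all add: comp_def split_beta' signed_sqrt_pair_def)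
  also have "\<dots> = \<nu>2"
    by (rule distr_random_sign_sqrt[OF \<gamma>_props(1) snd_\<gamma> sets2 sym2 \<gamma>_props(4)])
  finally have marginal2: "distr (signed_sqrt_coupling \<gamma>) borel snd = \<nu>2" .
  show ?thesis
    using G marginal1 marginal2
    by (simp add: couplings_def P.prob_space_distr signed_sqrt_coupling_def)
qed

lemma nn_integral_signed_sqrt_coupling_le:
  assumes "prob_space \<gamma>" and sets: "sets \<gamma> = sets (borel \<Otimes>\<^sub>M borel)"
  shows "(\<integral>\<^sup>+ z. ennreal (\<bar>fst z - snd z\<bar> powr 2) \<partial>signed_sqrt_coupling \<gamma>)
    \<le> (\<integral>\<^sup>+ z. ennreal (\<bar>fst z - snd z\<bar> powr 1) \<partial>\<gamma>)"
proof -
  interpret pair_prob_space \<gamma> "bernoulli_pmf (1/2)"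
    using \<open>prob_space \<gamma>\<close> by (rule pair_prob_space_measure_pmf)
  let ?P = "\<gamma> \<Otimes>\<^sub>M bernoulli_pmf (1/2)"
  have [measurable]: "fst \<in> borel_measurable \<gamma>" "snd \<in> borel_measurable \<gamma>"
    by (simp_all add: measurable_cong_sets[OF sets refl])
  have "(\<integral>\<^sup>+ z. ennreal (\<bar>fst z - snd z\<bar> powr 2) \<partial>signed_sqrt_coupling \<gamma>)
      = \<integral>\<^sup>+ w. ennreal (\<bar>fst (signed_sqrt_pair w) - snd (signed_sqrt_pair w)\<bar> powr 2) \<partial>?P"
    unfolding signed_sqrt_coupling_def using measurable_signed_sqrt_pair[OF sets]
    by (simp add: nn_integral_distr del: powr_numeral)
  also have "\<dots> \<le> \<integral>\<^sup>+ w. ennreal (\<bar>fst (fst w) - snd (fst w)\<bar> powr 1) \<partial>?P"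
    using power2_sqrt_abs_diff_le
    by (intro nn_integral_mono) (simp add: signed_sqrt_pair_def split_beta' abs_bool_sign_mult_diff)
  also have "\<dots> = \<integral>\<^sup>+ z. ennreal (\<bar>fst z - snd z\<bar> powr 1) \<partial>distr ?P \<gamma> fst"
    by (simp add: nn_integral_distr del: powr_one')
  also have "distr ?P \<gamma> fst = \<gamma>"
    by (rule measure_pmf.distr_pair_fst)
  finally show ?thesis .
qed

lemma transport_cost_2_le_transport_cost_1_power2:
  fixes \<nu>1 \<nu>2 :: "real measure"
  assumes "sets \<nu>1 = sets borel" "symmetric_measure \<nu>1" "sets \<nu>2 = sets borel" "symmetric_measure \<nu>2"
  shows "transport_cost 2 \<nu>1 \<nu>2
    \<le> transport_cost 1 (distr \<nu>1 borel (\<lambda>x. x\<^sup>2)) (distr \<nu>2 borel (\<lambda>x. x\<^sup>2))"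
  unfolding transport_cost_def[of 1]
proof (rule INF_greatest)
  fix \<gamma> assume \<gamma>: "\<gamma> \<in> couplings (distr \<nu>1 borel (\<lambda>x. x\<^sup>2)) (distr \<nu>2 borel (\<lambda>x. x\<^sup>2))"
  have "transport_cost 2 \<nu>1 \<nu>2 \<le> \<integral>\<^sup>+ z. ennreal (\<bar>fst z - snd z\<bar> powr 2) \<partial>signed_sqrt_coupling \<gamma>"
    unfolding transport_cost_def using signed_sqrt_coupling_in_couplings[OF \<gamma> assms] by (rule INF_lower)
  also have "\<dots> \<le> \<integral>\<^sup>+ z. ennreal (\<bar>fst z - snd z\<bar> powr 1) \<partial>\<gamma>"
    using couplingsD(1,2)[OF \<gamma>] by (rule nn_integral_signed_sqrt_coupling_le)
  finally show "transport_cost 2 \<nu>1 \<nu>2 \<le> \<integral>\<^sup>+ z. ennreal (\<bar>fst z - snd z\<bar> powr 1) \<partial>\<gamma>" .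
qed

lemma product_measure_in_couplings:
  fixes M N :: "real measure"
  assumes M: "prob_space M" "sets M = sets borel" and N: "prob_space N" "sets N = sets borel"
  shows "M \<Otimes>\<^sub>M N \<in> couplings M N"
proof -
  interpret pair_prob_space M N
    using M N by (simp add: pair_prob_space_def pair_sigma_finite_def prob_space_imp_sigma_finite)
  have sets_MN: "sets (M \<Otimes>\<^sub>M N) = sets borel"
    using sets_pair_measure_cong[OF M(2) N(2)] unfolding borel_prod .
  have "distr (M \<Otimes>\<^sub>M N) borel fst = distr (M \<Otimes>\<^sub>M N) M fst"
    by (rule distr_cong) (simp_all add: M(2))
  also have "\<dots> = M"
    by (rule M2.distr_pair_fst)
  finally have fst_marginal: "distr (M \<Otimes>\<^sub>M N) borel fst = M" .
  have "distr (M \<Otimes>\<^sub>M N) borel snd = distr (distr (N \<Otimes>\<^sub>M M) (M \<Otimes>\<^sub>M N) (\<lambda>(x, y). (y, x))) N snd"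
    by (subst distr_pair_swap[symmetric]) (rule distr_cong, simp_all add: N(2))
  also have "\<dots> = distr (N \<Otimes>\<^sub>M M) N fst"
    by (subst distr_distr) (auto simp: comp_def split_beta' intro!: distr_cong)
  also have "\<dots> = N"
    by (rule M1.distr_pair_fst)
  finally have snd_marginal: "distr (M \<Otimes>\<^sub>M N) borel snd = N" .
  show ?thesis
    using sets_MN fst_marginal snd_marginal P.prob_space_axioms by (simp add: couplings_def)
qed

lemma transport_cost_1_le:
  fixes M N :: "real measure"
  assumes M: "prob_space M" "sets M = sets borel" and N: "prob_space N" "sets N = sets borel"
    and bound_M: "AE x in M. \<bar>x\<bar> \<le> c" and bound_N: "AE x in N. \<bar>x\<bar> \<le> c"
  shows "transport_cost 1 M N \<le> ennreal (2 * c)"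
proof -
  have coupling: "M \<Otimes>\<^sub>M N \<in> couplings M N"
    by (rule product_measure_in_couplings[OF M N])
  note \<gamma> = couplingsD[OF coupling]
  interpret prob_space "M \<Otimes>\<^sub>M N" by (rule \<gamma>(1))
  have [measurable]: "fst \<in> borel_measurable (M \<Otimes>\<^sub>M N)" "snd \<in> borel_measurable (M \<Otimes>\<^sub>M N)"
    by (simp_all add: measurable_cong_sets[OF \<gamma>(2) refl])
  have "AE x in distr (M \<Otimes>\<^sub>M N) borel fst. \<bar>x\<bar> \<le> c"
    unfolding \<gamma>(3) by (rule bound_M)
  then have fst_bound: "AE z in M \<Otimes>\<^sub>M N. \<bar>fst z\<bar> \<le> c"
    by (subst (asm) AE_distr_iff) auto
  have "AE x in distr (M \<Otimes>\<^sub>M N) borel snd. \<bar>x\<bar> \<le> c"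
    unfolding \<gamma>(4) by (rule bound_N)
  then have snd_bound: "AE z in M \<Otimes>\<^sub>M N. \<bar>snd z\<bar> \<le> c"
    by (subst (asm) AE_distr_iff) auto
  have "AE z in M \<Otimes>\<^sub>M N. ennreal (\<bar>fst z - snd z\<bar> powr 1) \<le> ennreal (2 * c)"
    using fst_bound snd_bound by eventually_elim (auto intro: ennreal_leI)
  then have "(\<integral>\<^sup>+ z. ennreal (\<bar>fst z - snd z\<bar> powr 1) \<partial>(M \<Otimes>\<^sub>M N)) \<le> ennreal (2 * c)"
    using nn_integral_mono_AE by (fastforce simp: emeasure_space_1)
  moreover have "transport_cost 1 M N \<le> \<integral>\<^sup>+ z. ennreal (\<bar>fst z - snd z\<bar> powr 1) \<partial>(M \<Otimes>\<^sub>M N)"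
    unfolding transport_cost_def using coupling by (rule INF_lower)
  ultimately show ?thesis by order
qed

lemma wasserstein_1_le:
  fixes M N :: "real measure"
  assumes M: "prob_space M" "sets M = sets borel" and N: "prob_space N" "sets N = sets borel"
    and bound_M: "AE x in M. \<bar>x\<bar> \<le> c" and bound_N: "AE x in N. \<bar>x\<bar> \<le> c"
  shows "wasserstein 1 M N \<le> 2 * c"
proof -
  have "AE x in M. 0 \<le> c"
    using bound_M by eventually_elim auto
  then have "0 \<le> c"
    using prob_space.AE_const[OF M(1)] by simp
  have "wasserstein 1 M N \<le> enn2real (ennreal (2 * c))"
    unfolding wasserstein_1_eq
    by (rule enn2real_mono[OF transport_cost_1_le[OF M N bound_M bound_N]]) simp
  with \<open>0 \<le> c\<close> show ?thesis by simp
qed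

lemma AE_distr_abs_le:
  assumes "f \<in> borel_measurable M" and "AE x in M. \<bar>f x\<bar> \<le> c"
  shows "AE y in distr M borel f. \<bar>y :: real\<bar> \<le> c"
  using assms by (subst AE_distr_iff) auto

lemma power2_wasserstein_2_le_wasserstein_1_power2:
  fixes \<nu>1 \<nu>2 :: "real measure"
  assumes \<nu>1: "prob_space \<nu>1" "sets \<nu>1 = sets borel" "symmetric_measure \<nu>1" "AE x in \<nu>1. \<bar>x\<bar> \<le> c"
    and \<nu>2: "prob_space \<nu>2" "sets \<nu>2 = sets borel" "symmetric_measure \<nu>2" "AE x in \<nu>2. \<bar>x\<bar> \<le> c"
  shows "(wasserstein 2 \<nu>1 \<nu>2)\<^sup>2 \<le> wasserstein 1 (distr \<nu>1 borel (\<lambda>x. x\<^sup>2)) (distr \<nu>2 borel (\<lambda>x. x\<^sup>2))"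
proof -
  have square_props: "prob_space (distr \<nu> borel (\<lambda>x. x\<^sup>2))"
      "sets (distr \<nu> borel (\<lambda>x. x\<^sup>2)) = sets borel" "AE y in distr \<nu> borel (\<lambda>x. x\<^sup>2). \<bar>y\<bar> \<le> c\<^sup>2"
    if "prob_space \<nu>" "sets \<nu> = sets borel" "AE x in \<nu>. \<bar>x\<bar> \<le> c" for \<nu> :: "real measure"
  proof -
    have sq: "(\<lambda>x. x\<^sup>2) \<in> borel_measurable \<nu>"
      by (simp add: measurable_cong_sets[OF that(2) refl])
    show "prob_space (distr \<nu> borel (\<lambda>x. x\<^sup>2))"
      using sq by (rule prob_space.prob_space_distr[OF that(1)])
    show "sets (distr \<nu> borel (\<lambda>x. x\<^sup>2)) = sets borel" by simp
    have "AE x in \<nu>. \<bar>x\<^sup>2\<bar> \<le> c\<^sup>2"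
      using that(3)
    proof eventually_elim
      case (elim x)
      then have "\<bar>x\<bar> \<le> \<bar>c\<bar>" by linarith
      then show ?case by (simp add: abs_le_square_iff)
    qed
    with sq show "AE y in distr \<nu> borel (\<lambda>x. x\<^sup>2). \<bar>y\<bar> \<le> c\<^sup>2"
      by (rule AE_distr_abs_le)
  qed
  have "transport_cost 1 (distr \<nu>1 borel (\<lambda>x. x\<^sup>2)) (distr \<nu>2 borel (\<lambda>x. x\<^sup>2)) \<le> ennreal (2 * c\<^sup>2)"
    using square_props[OF \<nu>1(1,2,4)] square_props[OF \<nu>2(1,2,4)] by (intro transport_cost_1_le)
  then have finite: "transport_cost 1 (distr \<nu>1 borel (\<lambda>x. x\<^sup>2)) (distr \<nu>2 borel (\<lambda>x. x\<^sup>2)) < top"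
    by (rule le_less_trans) simp
  have "(wasserstein 2 \<nu>1 \<nu>2)\<^sup>2 = enn2real (transport_cost 2 \<nu>1 \<nu>2)"
    by (rule power2_wasserstein_2)
  also have "\<dots> \<le> enn2real (transport_cost 1 (distr \<nu>1 borel (\<lambda>x. x\<^sup>2)) (distr \<nu>2 borel (\<lambda>x. x\<^sup>2)))"
    using transport_cost_2_le_transport_cost_1_power2[OF \<nu>1(2,3) \<nu>2(2,3)] finite by (rule enn2real_mono)
  also have "\<dots> = wasserstein 1 (distr \<nu>1 borel (\<lambda>x. x\<^sup>2)) (distr \<nu>2 borel (\<lambda>x. x\<^sup>2))"
    by (rule wasserstein_1_eq[symmetric])
  finally show ?thesis .
qed

lemma power2_cSUP_le:
  fixes w :: "'a \<Rightarrow> real"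
  assumes "S \<noteq> {}" and nonneg: "\<And>x. x \<in> S \<Longrightarrow> 0 \<le> w x" and bound: "\<And>x. x \<in> S \<Longrightarrow> (w x)\<^sup>2 \<le> c"
  shows "(SUP x\<in>S. w x)\<^sup>2 \<le> c"
proof -
  obtain x0 where "x0 \<in> S" using \<open>S \<noteq> {}\<close> by blast
  have le_sqrt: "w x \<le> sqrt c" if "x \<in> S" for x
    using bound[OF that] nonneg[OF that] by (simp add: real_le_rsqrt)
  then have "bdd_above (w ` S)" by (rule bdd_aboveI2)
  then have "0 \<le> (SUP x\<in>S. w x)"
    using nonneg[OF \<open>x0 \<in> S\<close>] \<open>x0 \<in> S\<close> by (intro cSUP_upper2) auto
  moreover have "(SUP x\<in>S. w x) \<le> sqrt c"
    using \<open>S \<noteq> {}\<close> le_sqrt by (rule cSUP_least)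
  moreover have "0 \<le> c"
    using bound[OF \<open>x0 \<in> S\<close>] by (meson order_trans zero_le_power2)
  ultimately show ?thesis
    using power_mono[of "SUP x\<in>S. w x" "sqrt c" 2] by simp
qed

lemma borel_measurable_linear:
  fixes f :: "'a::euclidean_space \<Rightarrow> 'b::real_normed_vector"
  assumes "linear f"
  shows "f \<in> borel_measurable borel"
  using assms by (intro borel_measurable_continuous_onI linear_continuous_on)
    (simp add: linear_conv_bounded_linear)

lemma borel_measurable_outer_self [measurable]: "outer_self \<in> borel_measurable borel"
  unfolding outer_self_def by (intro borel_measurable_continuous_onI continuous_intros)

lemma outer_self_mult_vec: "outer_self x *v y = (x \<bullet> y) *\<^sub>R x"
  by (simp add: vec_eq_iff outer_self_def matrix_vector_mult_def inner_vec_def sum_distrib_left mult_ac)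

lemma op_norm_outer_self: "op_norm (outer_self x) \<le> (norm x)\<^sup>2"
  unfolding op_norm_def
proof (rule onorm_le)
  fix y
  have "norm (outer_self x *v y) = \<bar>x \<bullet> y\<bar> * norm x"
    by (simp add: outer_self_mult_vec)
  also have "\<dots> \<le> norm x * norm y * norm x"
    by (intro mult_right_mono Cauchy_Schwarz_ineq2) simp
  finally show "norm (outer_self x *v y) \<le> (norm x)\<^sup>2 * norm y"
    by (simp add: power2_eq_square mult_ac)
qed

lemma convex_on_op_norm: "convex_on UNIV op_norm"
proof (rule convex_onI)
  fix t :: real and A B :: "real^'n^'n"
  assume "0 < t" "t < 1"
  have "op_norm ((1 - t) *\<^sub>R A + t *\<^sub>R B) = onorm (\<lambda>x. (1 - t) *\<^sub>R (A *v x) + t *\<^sub>R (B *v x))"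
    by (simp add: op_norm_def matrix_vector_mult_add_rdistrib scaleR_matrix_vector_assoc)
  also have "\<dots> \<le> onorm (\<lambda>x. (1 - t) *\<^sub>R (A *v x)) + onorm (\<lambda>x. t *\<^sub>R (B *v x))"
    by (intro onorm_triangle bounded_linear_compose[OF bounded_linear_scaleR_right]
        matrix_vector_mul_bounded_linear)
  also have "\<dots> = (1 - t) * op_norm A + t * op_norm B"
    using \<open>0 < t\<close> \<open>t < 1\<close> by (simp add: onorm_scaleR op_norm_def)
  finally show "op_norm ((1 - t) *\<^sub>R A + t *\<^sub>R B) \<le> (1 - t) * op_norm A + t * op_norm B" .
qed simp

(* Convex functions on a Euclidean space are continuous. *)
lemma borel_measurable_op_norm [measurable]: "op_norm \<in> borel_measurable borel"
  using convex_measurable[of "\<lambda>A. A" borel UNIV op_norm] convex_on_op_norm by simp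

lemma dual_unit_ball_opD:
  assumes "f \<in> dual_unit_ball_op"
  shows "f \<in> borel_measurable borel" "\<bar>f A\<bar> \<le> op_norm A"
  using assms borel_measurable_linear by (auto simp: dual_unit_ball_op_def)

definition quadratic_form :: "real^'n \<Rightarrow> real^'n^'n \<Rightarrow> real" where
  "quadratic_form v A = v \<bullet> (A *v v)"

lemma linear_quadratic_form: "linear (quadratic_form v)"
  by (rule linearI) (simp_all add: quadratic_form_def matrix_vector_mult_add_rdistrib inner_add_right
      flip: scaleR_matrix_vector_assoc)

lemma quadratic_form_in_dual_unit_ball_op:
  fixes v :: "real^'n"
  assumes "norm v \<le> 1"
  shows "quadratic_form v \<in> dual_unit_ball_op"
  unfolding dual_unit_ball_op_def
proof (intro CollectI conjI allI linear_quadratic_form)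
  fix A :: "real^'n^'n"
  have "\<bar>quadratic_form v A\<bar> \<le> norm v * norm (A *v v)"
    unfolding quadratic_form_def by (rule Cauchy_Schwarz_ineq2)
  also have "\<dots> \<le> norm v * (op_norm A * norm v)"
    unfolding op_norm_def by (intro mult_left_mono onorm) simp_all
  also have "\<dots> = op_norm A * (norm v)\<^sup>2"
    by (simp add: power2_eq_square mult_ac)
  also have "\<dots> \<le> op_norm A"
    using power_le_one[OF norm_ge_zero assms] onorm_pos_le[OF matrix_vector_mul_bounded_linear, of A]
    by (simp add: op_norm_def mult_left_le)
  finally show "\<bar>quadratic_form v A\<bar> \<le> op_norm A" .
qed

lemma quadratic_form_outer_self: "quadratic_form v (outer_self x) = (x \<bullet> v)\<^sup>2"
  by (simp add: quadratic_form_def outer_self_mult_vec power2_eq_square inner_commute)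

lemma distr_quadratic_form_outer_self:
  assumes "sets \<mu> = sets borel"
  shows "distr (distr \<mu> borel outer_self) borel (quadratic_form v)
    = distr (distr \<mu> borel (\<lambda>x. x \<bullet> v)) borel (\<lambda>y. y\<^sup>2)"
proof -
  have [measurable]: "quadratic_form v \<in> borel_measurable borel"
    by (rule borel_measurable_linear[OF linear_quadratic_form])
  have [measurable]: "outer_self \<in> borel_measurable \<mu>" "(\<lambda>x. x \<bullet> v) \<in> borel_measurable \<mu>"
    by (simp_all add: measurable_cong_sets[OF assms refl])
  show ?thesis
    by (simp add: distr_distr comp_def quadratic_form_outer_self)
qed

lemma wasserstein_1_le_W11_op:
  fixes \<nu>1 \<nu>2 :: "(real^'n^'n) measure"
  assumes \<nu>1: "prob_space \<nu>1" "sets \<nu>1 = sets borel" "AE A in \<nu>1. op_norm A \<le> c"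
    and \<nu>2: "prob_space \<nu>2" "sets \<nu>2 = sets borel" "AE A in \<nu>2. op_norm A \<le> c"
    and "f \<in> dual_unit_ball_op"
  shows "wasserstein 1 (distr \<nu>1 borel f) (distr \<nu>2 borel f) \<le> W11_op \<nu>1 \<nu>2"
proof -
  have functional_props: "prob_space (distr \<nu> borel g)" "sets (distr \<nu> borel g) = sets borel"
      "AE y in distr \<nu> borel g. \<bar>y\<bar> \<le> c"
    if "g \<in> dual_unit_ball_op" "prob_space \<nu>" "sets \<nu> = sets borel" "AE A in \<nu>. op_norm A \<le> c"
    for g and \<nu> :: "(real^'n^'n) measure"
  proof -
    have g: "g \<in> borel_measurable \<nu>"
      using dual_unit_ball_opD(1)[OF that(1)] by (simp add: measurable_cong_sets[OF that(3) refl])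
    show "prob_space (distr \<nu> borel g)"
      using g by (rule prob_space.prob_space_distr[OF that(2)])
    show "sets (distr \<nu> borel g) = sets borel" by simp
    have "AE A in \<nu>. \<bar>g A\<bar> \<le> c"
      using that(4) by eventually_elim (use dual_unit_ball_opD(2)[OF that(1)] in \<open>blast intro: order_trans\<close>)
    with g show "AE y in distr \<nu> borel g. \<bar>y\<bar> \<le> c"
      by (rule AE_distr_abs_le)
  qed
  have "wasserstein 1 (distr \<nu>1 borel g) (distr \<nu>2 borel g) \<le> 2 * c" if "g \<in> dual_unit_ball_op" for g
    using functional_props[OF that \<nu>1] functional_props[OF that \<nu>2] by (intro wasserstein_1_le)
  then have "bdd_above ((\<lambda>g. wasserstein 1 (distr \<nu>1 borel g) (distr \<nu>2 borel g)) ` dual_unit_ball_op)"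
    by (rule bdd_aboveI2)
  with \<open>f \<in> dual_unit_ball_op\<close> show ?thesis
    unfolding W11_op_def by (rule cSUP_upper)
qed

lemma distr_outer_self_bounded:
  fixes \<mu> :: "(real^'n) measure"
  assumes "prob_space \<mu>" "sets \<mu> = sets borel" "AE x in \<mu>. norm x \<le> r"
  shows "prob_space (distr \<mu> borel outer_self)" "sets (distr \<mu> borel outer_self) = sets borel"
    "AE A in distr \<mu> borel outer_self. op_norm A \<le> r\<^sup>2"
proof -
  have [measurable]: "outer_self \<in> borel_measurable \<mu>"
    by (simp add: measurable_cong_sets[OF assms(2) refl])
  show "prob_space (distr \<mu> borel outer_self)"
    by (rule prob_space.prob_space_distr[OF assms(1)]) simp
  show "sets (distr \<mu> borel outer_self) = sets borel" by simp
  have "AE x in \<mu>. op_norm (outer_self x) \<le> r\<^sup>2"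
    using assms(3)
  proof eventually_elim
    case (elim x)
    then show ?case
      using op_norm_outer_self[of x] power_mono[OF elim norm_ge_zero, of 2] by linarith
  qed
  then show "AE A in distr \<mu> borel outer_self. op_norm A \<le> r\<^sup>2"
    by (subst AE_distr_iff) auto
qed

lemma distr_inner_symmetric_bounded:
  fixes \<mu> :: "(real^'n) measure"
  assumes "prob_space \<mu>" "sets \<mu> = sets borel" "symmetric_measure \<mu>" "AE x in \<mu>. norm x \<le> r"
    and "norm v \<le> 1"
  shows "prob_space (distr \<mu> borel (\<lambda>x. x \<bullet> v))" "sets (distr \<mu> borel (\<lambda>x. x \<bullet> v)) = sets borel"
    "symmetric_measure (distr \<mu> borel (\<lambda>x. x \<bullet> v))" "AE y in distr \<mu> borel (\<lambda>x. x \<bullet> v). \<bar>y\<bar> \<le> r"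
proof -
  have inner_v: "(\<lambda>x. x \<bullet> v) \<in> borel_measurable \<mu>"
    by (simp add: measurable_cong_sets[OF assms(2) refl])
  show "prob_space (distr \<mu> borel (\<lambda>x. x \<bullet> v))"
    using inner_v by (rule prob_space.prob_space_distr[OF assms(1)])
  show "sets (distr \<mu> borel (\<lambda>x. x \<bullet> v)) = sets borel" by simp
  show "symmetric_measure (distr \<mu> borel (\<lambda>x. x \<bullet> v))"
    using assms(3,2) by (rule symmetric_measure_distr) simp_all
  have "AE x in \<mu>. \<bar>x \<bullet> v\<bar> \<le> r"
    using assms(4)
  proof eventually_elim
    case (elim x)
    have "\<bar>x \<bullet> v\<bar> \<le> norm x * norm v" by (rule Cauchy_Schwarz_ineq2)
    also have "\<dots> \<le> norm x" using assms(5) by (simp add: mult_left_le)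
    finally show ?case using elim by linarith
  qed
  with inner_v show "AE y in distr \<mu> borel (\<lambda>x. x \<bullet> v). \<bar>y\<bar> \<le> r"
    by (rule AE_distr_abs_le)
qed

theorem lemma3p2:
  fixes \<mu>1 \<mu>2 :: "(real^'n) measure" and r :: real
  assumes "r > 0"
    and "prob_space \<mu>1" and "sets \<mu>1 = sets borel"
    and "prob_space \<mu>2" and "sets \<mu>2 = sets borel"
    and "symmetric_measure \<mu>1" and "symmetric_measure \<mu>2"
    and "AE x in \<mu>1. norm x \<le> r" and "AE x in \<mu>2. norm x \<le> r"
  shows "(W21 \<mu>1 \<mu>2)\<^sup>2 \<le> W11_op (distr \<mu>1 borel outer_self) (distr \<mu>2 borel outer_self)"
proof -
  note \<mu>1 = assms(2,3,6,8) and \<mu>2 = assms(4,5,7,9)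
  let ?W11 = "W11_op (distr \<mu>1 borel outer_self) (distr \<mu>2 borel outer_self)"
  have "(wasserstein 2 (distr \<mu>1 borel (\<lambda>x. x \<bullet> v)) (distr \<mu>2 borel (\<lambda>x. x \<bullet> v)))\<^sup>2 \<le> ?W11"
    if "norm v = 1" for v :: "real^'n"
  proof -
    have v: "norm v \<le> 1" using that by simp
    have "(wasserstein 2 (distr \<mu>1 borel (\<lambda>x. x \<bullet> v)) (distr \<mu>2 borel (\<lambda>x. x \<bullet> v)))\<^sup>2
        \<le> wasserstein 1 (distr (distr \<mu>1 borel (\<lambda>x. x \<bullet> v)) borel (\<lambda>y. y\<^sup>2))
            (distr (distr \<mu>2 borel (\<lambda>x. x \<bullet> v)) borel (\<lambda>y. y\<^sup>2))"
      by (rule power2_wasserstein_2_le_wasserstein_1_power2[OF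
          distr_inner_symmetric_bounded[OF \<mu>1 v] distr_inner_symmetric_bounded[OF \<mu>2 v]])
    also have "\<dots> = wasserstein 1 (distr (distr \<mu>1 borel outer_self) borel (quadratic_form v))
        (distr (distr \<mu>2 borel outer_self) borel (quadratic_form v))"
      by (simp add: distr_quadratic_form_outer_self \<mu>1(2) \<mu>2(2))
    also have "\<dots> \<le> ?W11"
      by (rule wasserstein_1_le_W11_op[OF distr_outer_self_bounded[OF \<mu>1(1,2,4)]
          distr_outer_self_bounded[OF \<mu>2(1,2,4)] quadratic_form_in_dual_unit_ball_op[OF v]])
    finally show ?thesis .
  qed
  moreover have "{v :: real^'n. norm v = 1} \<noteq> {}"
    using norm_axis_1 by blast
  ultimately show ?thesis
    unfolding W21_def by (intro power2_cSUP_le) (simp_all add: wasserstein_nonneg)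
qed

end
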